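(* Let $\alpha>0$, $0<q<\infty$, $r>0$, let $\mu$ be a positive Borel measure on $\mathbb{C}$, and let $\{a_k\}_{k=1}^\infty$ be an $r$-lattice of $\mathbb{C}$. The following are equivalent: (1) $\mu$ is an $(\infty,q)$ Fock-Carleson measure; (2) $\tilde{\mu}_t\in L^1(\mathbb{C},dA)$ for every $t>0$; (3) the function $z\mapsto\mu(B(z,r))$ belongs to $L^1(\mathbb{C},dA)$; (4) $\{\mu(B(a_k,r))\}_{k\ge1}\in \ell^1$.
   Context: $dA$ is area measure on $\mathbb{C}$, $B(z,r)$ is the open disc of center $z$ and radius $r$. $F^\infty_\alpha$ is the space of entire functions $f$ with $\|f\|_{\infty,\alpha}=\sup_{z}|f(z)|e^{-\alpha|z|^2/2}<\infty$. $\mu$ is an $(\infty,q)$ Fock-Carleson measure if there is $C>0$ with $\left[\int_{\mathbb{C}}|f(z)e^{-\alpha|z|^2/2}|^q\,d\mu(z)\right]^{1/q}\le C\|f\|_{\infty,\alpha}$ for all $f\in F^\infty_\alpha$. For $t>0$, the $t$-Berezin transform of $\mu$ is $\tilde{\mu}_t(z)=\frac{\alpha}{\pi}\int_{\mathbb{C}}e^{-\alpha t|z-w|^2/2}\,d\mu(w)$. A sequence $\{a_k\}$ in $\mathbb{C}$ is an $r$-lattice if $\mathbb{C}=\bigcup_k B(a_k,r)$ and the discs $B(a_k,r/2)$ are pairwise disjoint. *)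

theory Defs
  imports "HOL-Analysis.Analysis"
begin

definition fock_inf :: "real \<Rightarrow> (complex \<Rightarrow> complex) set" where
  "fock_inf \<alpha> = {f. f holomorphic_on UNIV \<and>
      bdd_above (range (\<lambda>z. norm (f z) * exp (- \<alpha> * (cmod z)^2 / 2)))}"

definition fock_inf_norm :: "real \<Rightarrow> (complex \<Rightarrow> complex) \<Rightarrow> real" where
  "fock_inf_norm \<alpha> f = (SUP z. norm (f z) * exp (- \<alpha> * (cmod z)^2 / 2))"

definition fock_carleson_inf :: "real \<Rightarrow> real \<Rightarrow> complex measure \<Rightarrow> bool" where
  "fock_carleson_inf \<alpha> q \<mu> \<longleftrightarrow> (\<exists>C>0. \<forall>f\<in>fock_inf \<alpha>.
      (\<integral>\<^sup>+ z. ennreal ((norm (f z) * exp (- \<alpha> * (cmod z)^2 / 2)) powr q) \<partial>\<mu>) < \<infinity> \<and>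
      (enn2real (\<integral>\<^sup>+ z. ennreal ((norm (f z) * exp (- \<alpha> * (cmod z)^2 / 2)) powr q) \<partial>\<mu>))
         powr (1 / q) \<le> C * fock_inf_norm \<alpha> f)"

definition berezin :: "real \<Rightarrow> real \<Rightarrow> complex measure \<Rightarrow> complex \<Rightarrow> ennreal" where
  "berezin \<alpha> t \<mu> z = ennreal (\<alpha> / pi) *
      (\<integral>\<^sup>+ w. ennreal (exp (- \<alpha> * t * (cmod (z - w))^2 / 2)) \<partial>\<mu>)"

definition r_lattice :: "real \<Rightarrow> (nat \<Rightarrow> complex) \<Rightarrow> bool" where
  "r_lattice r a \<longleftrightarrow> (\<Union>k. ball (a k) r) = UNIV \<and>
      (\<forall>j k. j \<noteq> k \<longrightarrow> ball (a j) (r/2) \<inter> ball (a k) (r/2) = {})"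

end

theory Submission
  imports Defs "HOL-Probability.Distributions"
begin

(* All four conditions are equivalent to mu(C) < infinity.  By Tonelli, the integral of mu(B(z,r))
   over z is pi r^2 mu(C), and the integral of the t-Berezin transform is mu(C) times a Gaussian
   integral; the sigma-finiteness needed for Tonelli follows from the finiteness of the integral,
   since a disc of infinite measure would make mu(B(z,r)) infinite on a set of positive area.  The
   Berezin transform dominates a multiple of mu(B(z,r)), and every point lies in at most 9 of the
   discs B(a_k,r), so the lattice sum lies between mu(C) and 9 mu(C).  A finite measure is trivially
   (infinity,q) Fock-Carleson.  Conversely, products of sums of normalised reproducing kernels along
   sparse shifted lattices in the real and imaginary directions give finitely many functions of
   bounded Fock norm such that at every point of a given disc B(0,n) one of them has weighted
   modulus bounded below; testing the Carleson inequality on them bounds mu(B(0,n)) independently of n. *)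

section \<open>Measures of discs\<close>

lemma open_emeasure_ball_gt:
  fixes \<mu> :: "'a::metric_space measure"
  assumes sets: "sets \<mu> = sets borel"
  shows "open {z. y < emeasure \<mu> (ball z r)}"
proof (rule openI)
  fix z assume "z \<in> {z. y < emeasure \<mu> (ball z r)}"
  then have y: "y < emeasure \<mu> (ball z r)" by simp
  define A where "A n = ball z (r - 1 / Suc n)" for n :: nat
  have "incseq A"
    unfolding A_def by (intro incseq_SucI subset_ball) (simp add: frac_le)
  moreover have "(\<Union>n. A n) = ball z r"
  proof
    show "(\<Union>n. A n) \<subseteq> ball z r"
      unfolding A_def by (intro UN_least subset_ball) simp
    show "ball z r \<subseteq> (\<Union>n. A n)"
    proof
      fix w assume "w \<in> ball z r"
      then obtain n where "1 / Suc n < r - dist z w"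
        using reals_Archimedean[of "r - dist z w"] by (auto simp: inverse_eq_divide)
      then have "w \<in> A n" by (simp add: A_def)
      then show "w \<in> (\<Union>n. A n)" by blast
    qed
  qed
  ultimately have "(SUP n. emeasure \<mu> (A n)) = emeasure \<mu> (ball z r)"
    using sets by (subst SUP_emeasure_incseq) (auto simp: A_def)
  with y obtain n where n: "y < emeasure \<mu> (A n)"
    by (metis less_SUP_iff)
  have "ball z (1 / Suc n) \<subseteq> {z. y < emeasure \<mu> (ball z r)}"
  proof
    fix z' assume z': "z' \<in> ball z (1 / Suc n)"
    have "A n \<subseteq> ball z' r"
    proof
      fix w assume "w \<in> A n"
      then have "dist z w < r - 1 / Suc n" by (simp add: A_def)
      moreover have "dist z' w \<le> dist z' z + dist z w" by (rule dist_triangle)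
      ultimately show "w \<in> ball z' r" using z' by (simp add: dist_commute)
    qed
    then have "emeasure \<mu> (A n) \<le> emeasure \<mu> (ball z' r)"
      using sets by (intro emeasure_mono) auto
    with n show "z' \<in> {z. y < emeasure \<mu> (ball z r)}" by simp
  qed
  then show "\<exists>e>0. ball z e \<subseteq> {z. y < emeasure \<mu> (ball z r)}"
    by (intro exI[of _ "1 / Suc n"]) auto
qed

lemma borel_measurable_emeasure_ball:
  fixes \<mu> :: "'a::metric_space measure"
  assumes "sets \<mu> = sets borel"
  shows "(\<lambda>z. emeasure \<mu> (ball z r)) \<in> borel_measurable borel"
  using open_emeasure_ball_gt[OF assms] by (intro borel_measurableI_greater) auto

lemma emeasure_le_sum_nn_integral_if_cover:
  assumes "finite I" and "A \<in> sets M" and "\<And>i. i \<in> I \<Longrightarrow> g i \<in> borel_measurable M"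
    and cover: "\<And>x. x \<in> A \<Longrightarrow> \<exists>i\<in>I. 1 \<le> g i x"
  shows "emeasure M A \<le> (\<Sum>i\<in>I. \<integral>\<^sup>+ x. g i x \<partial>M)"
proof -
  have "indicator A x \<le> (\<Sum>i\<in>I. g i x)" for x
  proof (cases "x \<in> A")
    case True
    then obtain i where "i \<in> I" "1 \<le> g i x"
      using cover by blast
    moreover have "g i x \<le> (\<Sum>i\<in>I. g i x)"
      using \<open>i \<in> I\<close> assms(1) by (intro member_le_sum) auto
    ultimately show ?thesis
      using True by simp
  qed simp
  then have "(\<integral>\<^sup>+ x. indicator A x \<partial>M) \<le> (\<integral>\<^sup>+ x. (\<Sum>i\<in>I. g i x) \<partial>M)"
    by (intro nn_integral_mono)
  then have "emeasure M A \<le> (\<integral>\<^sup>+ x. (\<Sum>i\<in>I. g i x) \<partial>M)"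
    using assms(2) by simp
  also have "\<dots> = (\<Sum>i\<in>I. \<integral>\<^sup>+ x. g i x \<partial>M)"
    using assms(3) by (rule nn_integral_sum)
  finally show ?thesis .
qed

lemma emeasure_UNIV_le_if_emeasure_ball_le:
  fixes \<mu> :: "'a::real_normed_vector measure"
  assumes sets: "sets \<mu> = sets borel" and le: "\<And>n::nat. emeasure \<mu> (ball 0 n) \<le> K"
  shows "emeasure \<mu> UNIV \<le> K"
proof -
  have "x \<in> (\<Union>n::nat. ball 0 n)" for x :: 'a
  proof -
    obtain n :: nat where "norm x < n"
      using reals_Archimedean2 by blast
    then show ?thesis by auto
  qed
  then have "(\<Union>n::nat. ball (0::'a) n) = UNIV"
    by blast
  then have "emeasure \<mu> UNIV = (SUP n::nat. emeasure \<mu> (ball 0 n))"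
    using sets by (subst SUP_emeasure_incseq) (auto intro!: incseq_SucI subset_ball)
  also have "\<dots> \<le> K"
    by (intro SUP_least le)
  finally show ?thesis .
qed

lemma borel_measurable_lborel_pair_measure:
  fixes \<mu> :: "'b::second_countable_topology measure"
  assumes "sets \<mu> = sets borel"
    and "F \<in> borel_measurable (borel :: ('a::euclidean_space \<times> 'b) measure)"
  shows "F \<in> borel_measurable (lborel \<Otimes>\<^sub>M \<mu>)"
proof -
  have "sets (lborel \<Otimes>\<^sub>M \<mu>) = sets (borel :: ('a \<times> 'b) measure)"
    using sets_pair_measure_cong[OF sets_lborel assms(1)] by (simp only: borel_prod)
  then show ?thesis
    using assms(2) measurable_cong_sets by blast
qed

lemma nn_integral_emeasure_ball:
  fixes \<mu> :: "'a::euclidean_space measure"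
  assumes sets: "sets \<mu> = sets borel" and "sigma_finite_measure \<mu>" and r: "r \<ge> 0"
  shows "(\<integral>\<^sup>+ z. emeasure \<mu> (ball z r) \<partial>lborel)
           = ennreal (unit_ball_vol DIM('a) * r ^ DIM('a)) * emeasure \<mu> UNIV"
proof -
  interpret pair_sigma_finite lborel \<mu>
    by (intro pair_sigma_finite.intro assms(2)) (rule lborel.sigma_finite_measure_axioms)
  define X where "X = {p :: 'a \<times> 'a. dist (fst p) (snd p) < r}"
  have X_meas: "(\<lambda>(z, w). indicator X (z, w) :: ennreal) \<in> borel_measurable (lborel \<Otimes>\<^sub>M \<mu>)"
  proof (rule borel_measurable_lborel_pair_measure[OF sets])
    have "open X" unfolding X_def by (intro open_Collect_less continuous_intros)
    then show "(\<lambda>(z, w). indicator X (z, w) :: ennreal) \<in> borel_measurable borel"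
      by (simp add: split_beta')
  qed
  have inner: "(\<integral>\<^sup>+ z. indicator X (z, w) \<partial>lborel) = emeasure lborel (ball w r)" for w
  proof -
    have "(\<lambda>z. indicator X (z, w)) = (indicator (ball w r) :: 'a \<Rightarrow> ennreal)"
      by (auto simp: X_def indicator_def dist_commute)
    then show ?thesis by simp
  qed
  have "emeasure \<mu> (ball z r) = (\<integral>\<^sup>+ w. indicator X (z, w) \<partial>\<mu>)" for z
  proof -
    have "(\<lambda>w. indicator X (z, w)) = (indicator (ball z r) :: 'a \<Rightarrow> ennreal)"
      by (auto simp: X_def indicator_def)
    then show ?thesis using sets by simp
  qed
  then have "(\<integral>\<^sup>+ z. emeasure \<mu> (ball z r) \<partial>lborel)
      = (\<integral>\<^sup>+ z. (\<integral>\<^sup>+ w. indicator X (z, w) \<partial>\<mu>) \<partial>lborel)"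
    by simp
  also have "\<dots> = (\<integral>\<^sup>+ w. (\<integral>\<^sup>+ z. indicator X (z, w) \<partial>lborel) \<partial>\<mu>)"
    by (rule Fubini'[symmetric]) (rule X_meas)
  also have "\<dots> = (\<integral>\<^sup>+ w. emeasure lborel (ball w r) \<partial>\<mu>)"
    by (simp add: inner)
  also have "\<dots> = ennreal (unit_ball_vol DIM('a) * r ^ DIM('a)) * emeasure \<mu> UNIV"
    using sets_eq_imp_space_eq[OF sets] r by (simp add: emeasure_ball)
  finally show ?thesis .
qed

lemma sigma_finite_if_emeasure_ball_finite:
  fixes \<mu> :: "'a::{metric_space, second_countable_topology} measure"
  assumes sets: "sets \<mu> = sets borel" and e: "e > 0"
    and fin: "\<And>p. emeasure \<mu> (ball p e) < \<infinity>"
  shows "sigma_finite_measure \<mu>"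
proof -
  obtain D :: "'a set" where D: "countable D" "\<And>X. open X \<Longrightarrow> X \<noteq> {} \<Longrightarrow> \<exists>d\<in>D. d \<in> X"
    using countable_dense_setE by blast
  have "(\<Union>d\<in>D. ball d e) = UNIV"
    using D(2)[of "ball _ e"] e by (force simp: dist_commute)
  then show ?thesis
    unfolding sigma_finite_measure_def using D(1) fin sets_eq_imp_space_eq[OF sets]
    by (intro exI[of _ "(\<lambda>d. ball d e) ` D"]) (auto simp: sets less_top)
qed

lemma sigma_finite_if_emeasure_UNIV_finite:
  assumes "sets \<mu> = sets (borel :: 'a::topological_space measure)" and "emeasure \<mu> UNIV < \<infinity>"
  shows "sigma_finite_measure \<mu>"
proof -
  have "finite_measure \<mu>"
    using assms sets_eq_imp_space_eq[OF assms(1)] by (intro finite_measureI) auto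
  then show ?thesis
    by (rule finite_measure.axioms)
qed

lemma emeasure_ball_finite_if_nn_integral_emeasure_ball_finite:
  fixes \<mu> :: "'a::euclidean_space measure"
  assumes sets: "sets \<mu> = sets borel" and r: "r > 0"
    and fin: "(\<integral>\<^sup>+ z. emeasure \<mu> (ball z r) \<partial>lborel) < \<infinity>"
  shows "emeasure \<mu> (ball p (r / 2)) < \<infinity>"
proof (rule ccontr)
  assume "\<not> ?thesis"
  then have inf: "emeasure \<mu> (ball p (r / 2)) = \<infinity>" by (simp add: less_top[symmetric])
  have "\<infinity> * indicator (ball p (r / 2)) z \<le> emeasure \<mu> (ball z r)" for z
  proof (cases "z \<in> ball p (r / 2)")
    case True
    then have "ball p (r / 2) \<subseteq> ball z r"
      by (intro subsetI) (metis dist_commute dist_triangle_half_r mem_ball)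
    then have "emeasure \<mu> (ball p (r / 2)) \<le> emeasure \<mu> (ball z r)"
      using sets by (intro emeasure_mono) auto
    with inf True show ?thesis by simp
  qed simp
  then have "(\<integral>\<^sup>+ z. \<infinity> * indicator (ball p (r / 2)) z \<partial>lborel) < \<infinity>"
    using fin by (meson le_less_trans nn_integral_mono)
  moreover have "(\<integral>\<^sup>+ z. \<infinity> * indicator (ball p (r / 2)) z \<partial>lborel) = \<infinity>"
    using r unit_ball_vol_pos[of "DIM('a)"]
    by (subst nn_integral_cmult_indicator)
       (auto simp: emeasure_ball ennreal_top_mult less_imp_neq[symmetric])
  ultimately show False by simp
qed

lemma nn_integral_emeasure_ball_finite_iff:
  fixes \<mu> :: "'a::euclidean_space measure"
  assumes sets: "sets \<mu> = sets borel" and r: "r > 0"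
  shows "(\<integral>\<^sup>+ z. emeasure \<mu> (ball z r) \<partial>lborel) < \<infinity> \<longleftrightarrow> emeasure \<mu> UNIV < \<infinity>"
proof
  assume fin: "(\<integral>\<^sup>+ z. emeasure \<mu> (ball z r) \<partial>lborel) < \<infinity>"
  have "sigma_finite_measure \<mu>"
    using r emeasure_ball_finite_if_nn_integral_emeasure_ball_finite[OF sets r fin]
    by (intro sigma_finite_if_emeasure_ball_finite[OF sets, of "r / 2"]) auto
  with fin show "emeasure \<mu> UNIV < \<infinity>"
    using r unit_ball_vol_pos[of "DIM('a)"]
    by (auto simp: nn_integral_emeasure_ball[OF sets] ennreal_mult_less_top less_imp_neq[symmetric])
next
  assume fin: "emeasure \<mu> UNIV < \<infinity>"
  with sigma_finite_if_emeasure_UNIV_finite[OF sets]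
  show "(\<integral>\<^sup>+ z. emeasure \<mu> (ball z r) \<partial>lborel) < \<infinity>"
    using r by (simp add: nn_integral_emeasure_ball[OF sets] ennreal_mult_less_top)
qed

section \<open>Lattices\<close>

lemma r_lattice_card_le:
  assumes lattice: "r_lattice r a" and r: "r > 0" and F: "finite F"
    and near: "\<And>k. k \<in> F \<Longrightarrow> z \<in> ball (a k) r"
  shows "card F \<le> 9"
proof -
  \<comment> \<open>The disjoint discs \<open>B(a k, r/2)\<close>, \<open>k \<in> F\<close>, fit into \<open>B(z, 3r/2)\<close>; compare areas.\<close>
  have "disjoint_family_on (\<lambda>k. ball (a k) (r / 2)) F"
    using lattice unfolding r_lattice_def disjoint_family_on_def by blast
  then have "(\<Sum>k\<in>F. emeasure lborel (ball (a k) (r / 2)))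
      = emeasure lborel (\<Union>k\<in>F. ball (a k) (r / 2))"
    using F by (intro sum_emeasure) auto
  also have "\<dots> \<le> emeasure lborel (ball z (3 * r / 2))"
  proof (intro emeasure_mono UN_least subsetI)
    fix k x assume "k \<in> F" "x \<in> ball (a k) (r / 2)"
    then have "dist z (a k) < r" "dist (a k) x < r / 2"
      using near by (auto simp: dist_commute)
    then show "x \<in> ball z (3 * r / 2)"
      using dist_triangle[of z x "a k"] by simp
  qed auto
  finally have "of_nat (card F) * ennreal (pi * (r / 2)\<^sup>2) \<le> ennreal (pi * (3 * r / 2)\<^sup>2)"
    using r by (simp add: emeasure_ball unit_ball_vol_2)
  then have "card F * (pi * (r / 2)\<^sup>2) \<le> 9 * (pi * (r / 2)\<^sup>2)"
    by (simp add: ennreal_of_nat_eq_real_of_nat ennreal_mult[symmetric] ennreal_le_iff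
                  power2_eq_square)
  then show ?thesis
    using r by simp
qed

lemma r_lattice_suminf_indicator_le:
  assumes "r_lattice r a" and "r > 0"
  shows "(\<Sum>k. indicator (ball (a k) r) z :: ennreal) \<le> 9"
proof (rule suminf_le_const)
  fix n
  have "(\<Sum>k<n. indicator (ball (a k) r) z :: ennreal) = of_nat (card {k\<in>{..<n}. z \<in> ball (a k) r})"
    by (simp add: indicator_def sum_of_bool_eq Int_def)
  also have "\<dots> \<le> 9"
    using r_lattice_card_le[OF assms, of "{k\<in>{..<n}. z \<in> ball (a k) r}" z] by simp
  finally show "(\<Sum>k<n. indicator (ball (a k) r) z :: ennreal) \<le> 9" .
qed (rule summableI)

lemma r_lattice_suminf_emeasure_le:
  fixes \<mu> :: "complex measure"
  assumes sets: "sets \<mu> = sets borel" and "r_lattice r a" and "r > 0"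
  shows "(\<Sum>k. emeasure \<mu> (ball (a k) r)) \<le> 9 * emeasure \<mu> UNIV"
proof -
  have "(\<Sum>k. emeasure \<mu> (ball (a k) r)) = (\<Sum>k. \<integral>\<^sup>+ z. indicator (ball (a k) r) z \<partial>\<mu>)"
    using sets by (intro suminf_cong nn_integral_indicator[symmetric]) simp
  also have "\<dots> = (\<integral>\<^sup>+ z. (\<Sum>k. indicator (ball (a k) r) z) \<partial>\<mu>)"
    by (rule nn_integral_suminf[symmetric])
       (simp add: measurable_cong_sets[OF sets refl] borel_measurable_indicator)
  also have "\<dots> \<le> (\<integral>\<^sup>+ z. 9 \<partial>\<mu>)"
    by (intro nn_integral_mono r_lattice_suminf_indicator_le[OF assms(2,3)])
  also have "\<dots> = 9 * emeasure \<mu> UNIV"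
    by (simp add: sets_eq_imp_space_eq[OF sets])
  finally show ?thesis .
qed

lemma r_lattice_suminf_emeasure_finite_iff:
  fixes \<mu> :: "complex measure"
  assumes sets: "sets \<mu> = sets borel" and lattice: "r_lattice r a" and r: "r > 0"
  shows "(\<Sum>k. emeasure \<mu> (ball (a k) r)) < \<infinity> \<longleftrightarrow> emeasure \<mu> UNIV < \<infinity>"
proof
  have "emeasure \<mu> UNIV = emeasure \<mu> (\<Union>k. ball (a k) r)"
    using lattice unfolding r_lattice_def by simp
  also have "\<dots> \<le> (\<Sum>k. emeasure \<mu> (ball (a k) r))"
    by (rule emeasure_subadditive_countably) (auto simp: sets)
  finally show "(\<Sum>k. emeasure \<mu> (ball (a k) r)) < \<infinity> \<Longrightarrow> emeasure \<mu> UNIV < \<infinity>"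
    by (rule le_less_trans)
next
  assume "emeasure \<mu> UNIV < \<infinity>"
  then have "9 * emeasure \<mu> UNIV < \<infinity>"
    by (simp add: ennreal_mult_less_top)
  with r_lattice_suminf_emeasure_le[OF assms] show "(\<Sum>k. emeasure \<mu> (ball (a k) r)) < \<infinity>"
    by (rule le_less_trans)
qed

section \<open>The Berezin transform\<close>

lemma integrable_exp_neg_sq:
  fixes c :: real
  assumes c: "c > 0"
  shows "integrable lborel (\<lambda>x::real. exp (- c * x\<^sup>2))"
proof -
  define \<sigma> where "\<sigma> = 1 / sqrt (2 * c)"
  have "exp (- c * x\<^sup>2) = sqrt (pi / c) * normal_density 0 \<sigma> x" for x
    using c by (simp add: normal_density_def \<sigma>_def real_sqrt_divide power_divide field_simps)
  moreover have "integrable lborel (\<lambda>x. sqrt (pi / c) * normal_density 0 \<sigma> x)"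
    using c by (intro integrable_mult_right integrable_normal_density) (simp add: \<sigma>_def)
  ultimately show ?thesis
    by simp
qed

lemma nn_integral_exp_neg_norm_sq_finite:
  fixes c :: real
  assumes c: "c > 0"
  shows "(\<integral>\<^sup>+ u. ennreal (exp (- c * (norm (u::'a::euclidean_space))\<^sup>2)) \<partial>lborel) < \<infinity>"
proof -
  have "ennreal (exp (- c * (norm u)\<^sup>2)) = (\<Prod>b\<in>Basis. ennreal (exp (- c * (u \<bullet> b)\<^sup>2)))"
    for u :: 'a
  proof -
    have "(norm u)\<^sup>2 = (\<Sum>b\<in>Basis. (u \<bullet> b)\<^sup>2)"
      unfolding power2_norm_eq_inner by (subst euclidean_inner) (simp add: power2_eq_square)
    then show ?thesis
      by (simp add: sum_distrib_left exp_sum prod_ennreal)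
  qed
  then have "(\<integral>\<^sup>+ u. ennreal (exp (- c * (norm u)\<^sup>2)) \<partial>(lborel :: 'a measure))
      = (\<integral>\<^sup>+ u. (\<Prod>b\<in>Basis. ennreal (exp (- c * (u \<bullet> b)\<^sup>2))) \<partial>(lborel :: 'a measure))"
    by (simp only:)
  also have "\<dots> = (\<Prod>b\<in>(Basis::'a set). \<integral>\<^sup>+ x. ennreal (exp (- c * x\<^sup>2)) \<partial>lborel)"
    by (rule nn_integral_lborel_prod) auto
  also have "\<dots> < \<infinity>"
    using integrable_exp_neg_sq[OF c] by (simp add: integrable_iff_bounded power_less_top_ennreal)
  finally show ?thesis .
qed

lemma nn_integral_lborel_translate:
  fixes f :: "'a::euclidean_space \<Rightarrow> ennreal"
  assumes "f \<in> borel_measurable borel"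
  shows "(\<integral>\<^sup>+ z. f (z - w) \<partial>lborel) = (\<integral>\<^sup>+ z. f z \<partial>lborel)"
proof -
  have "(\<integral>\<^sup>+ z. f z \<partial>lborel) = (\<integral>\<^sup>+ z. f z \<partial>distr lborel borel ((+) (- w)))"
    by (simp add: lborel_distr_plus)
  also have "\<dots> = (\<integral>\<^sup>+ z. f (- w + z) \<partial>lborel)"
    using assms by (intro nn_integral_distr) auto
  finally show ?thesis by simp
qed

lemma nn_integral_berezin:
  fixes \<mu> :: "complex measure"
  assumes sets: "sets \<mu> = sets borel" and "sigma_finite_measure \<mu>"
  shows "(\<integral>\<^sup>+ z. berezin \<alpha> t \<mu> z \<partial>lborel)
           = ennreal (\<alpha> / pi) * (\<integral>\<^sup>+ u. ennreal (exp (- \<alpha> * t * (cmod u)\<^sup>2 / 2)) \<partial>lborel)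
               * emeasure \<mu> UNIV"
proof -
  interpret pair_sigma_finite lborel \<mu>
    by (intro pair_sigma_finite.intro assms(2)) (rule lborel.sigma_finite_measure_axioms)
  define g where "g u = ennreal (\<alpha> / pi) * ennreal (exp (- \<alpha> * t * (cmod u)\<^sup>2 / 2))"
    for u :: complex
  have g_meas [measurable]: "g \<in> borel_measurable borel"
    unfolding g_def by measurable
  have "berezin \<alpha> t \<mu> z = (\<integral>\<^sup>+ w. g (z - w) \<partial>\<mu>)" for z
  proof -
    have "(\<lambda>w. ennreal (exp (- \<alpha> * t * (cmod (z - w))\<^sup>2 / 2))) \<in> borel_measurable \<mu>"
      unfolding measurable_cong_sets[OF sets refl] by measurable
    then show ?thesis
      unfolding berezin_def g_def by (simp add: nn_integral_cmult)
  qed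
  then have "(\<integral>\<^sup>+ z. berezin \<alpha> t \<mu> z \<partial>lborel) = (\<integral>\<^sup>+ z. (\<integral>\<^sup>+ w. g (z - w) \<partial>\<mu>) \<partial>lborel)"
    by simp
  also have "\<dots> = (\<integral>\<^sup>+ w. (\<integral>\<^sup>+ z. g (z - w) \<partial>lborel) \<partial>\<mu>)"
  proof (rule Fubini'[symmetric], rule borel_measurable_lborel_pair_measure[OF sets])
    have "(\<lambda>p :: complex \<times> complex. fst p - snd p) \<in> borel_measurable borel"
      by (intro borel_measurable_continuous_onI continuous_intros)
    from measurable_compose[OF this g_meas]
    show "(\<lambda>(z, w). g (z - w)) \<in> borel_measurable borel"
      by (simp add: split_beta')
  qed
  also have "\<dots> = (\<integral>\<^sup>+ w. (\<integral>\<^sup>+ u. g u \<partial>lborel) \<partial>\<mu>)"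
    by (simp add: nn_integral_lborel_translate)
  also have "\<dots> = ennreal (\<alpha> / pi) * (\<integral>\<^sup>+ u. ennreal (exp (- \<alpha> * t * (cmod u)\<^sup>2 / 2)) \<partial>lborel)
               * emeasure \<mu> UNIV"
    unfolding g_def using sets_eq_imp_space_eq[OF sets] by (simp add: nn_integral_cmult)
  finally show ?thesis .
qed

lemma berezin_ge_emeasure_ball:
  fixes \<mu> :: "complex measure"
  assumes sets: "sets \<mu> = sets borel" and "\<alpha> \<ge> 0" and "t \<ge> 0"
  shows "ennreal (\<alpha> / pi * exp (- \<alpha> * t * r\<^sup>2 / 2)) * emeasure \<mu> (ball z r) \<le> berezin \<alpha> t \<mu> z"
proof -
  have "ennreal (exp (- \<alpha> * t * r\<^sup>2 / 2)) * indicator (ball z r) w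
          \<le> ennreal (exp (- \<alpha> * t * (cmod (z - w))\<^sup>2 / 2))" for w
  proof (cases "w \<in> ball z r")
    case True
    then have "(cmod (z - w))\<^sup>2 \<le> r\<^sup>2"
      by (intro power_mono) (auto simp: dist_norm)
    then have "- \<alpha> * t * r\<^sup>2 / 2 \<le> - \<alpha> * t * (cmod (z - w))\<^sup>2 / 2"
      using assms(2,3) by (simp add: mult_left_mono)
    with True show ?thesis by (simp add: ennreal_leI)
  qed simp
  then have "ennreal (exp (- \<alpha> * t * r\<^sup>2 / 2)) * emeasure \<mu> (ball z r)
               \<le> (\<integral>\<^sup>+ w. ennreal (exp (- \<alpha> * t * (cmod (z - w))\<^sup>2 / 2)) \<partial>\<mu>)"
    using sets by (subst nn_integral_cmult_indicator[symmetric]) (auto intro: nn_integral_mono)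
  then have "ennreal (\<alpha> / pi) * (ennreal (exp (- \<alpha> * t * r\<^sup>2 / 2)) * emeasure \<mu> (ball z r))
               \<le> berezin \<alpha> t \<mu> z"
    unfolding berezin_def by (rule mult_left_mono) simp
  moreover have "ennreal (\<alpha> / pi * exp (- \<alpha> * t * r\<^sup>2 / 2))
                   = ennreal (\<alpha> / pi) * ennreal (exp (- \<alpha> * t * r\<^sup>2 / 2))"
    using assms(2) by (intro ennreal_mult) auto
  ultimately show ?thesis
    by (simp only: mult.assoc)
qed

lemma nn_integral_berezin_finite_iff:
  fixes \<mu> :: "complex measure"
  assumes sets: "sets \<mu> = sets borel" and \<alpha>: "\<alpha> > 0"
  shows "(\<forall>t>0. (\<integral>\<^sup>+ z. berezin \<alpha> t \<mu> z \<partial>lborel) < \<infinity>) \<longleftrightarrow> emeasure \<mu> UNIV < \<infinity>"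
proof
  assume "\<forall>t>0. (\<integral>\<^sup>+ z. berezin \<alpha> t \<mu> z \<partial>lborel) < \<infinity>"
  then have fin: "(\<integral>\<^sup>+ z. berezin \<alpha> 1 \<mu> z \<partial>lborel) < \<infinity>" by simp
  define K where "K = \<alpha> / pi * exp (- \<alpha> / 2)"
  have "ennreal K * (\<integral>\<^sup>+ z. emeasure \<mu> (ball z 1) \<partial>lborel)
          = (\<integral>\<^sup>+ z. ennreal K * emeasure \<mu> (ball z 1) \<partial>lborel)"
    using borel_measurable_emeasure_ball[OF sets] by (simp add: nn_integral_cmult)
  also have "\<dots> \<le> (\<integral>\<^sup>+ z. berezin \<alpha> 1 \<mu> z \<partial>lborel)"
    using berezin_ge_emeasure_ball[OF sets, of \<alpha> 1 1] \<alpha>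
    by (intro nn_integral_mono) (simp add: K_def)
  finally have "ennreal K * (\<integral>\<^sup>+ z. emeasure \<mu> (ball z 1) \<partial>lborel) < \<infinity>"
    using fin by simp
  moreover have "K > 0"
    using \<alpha> by (simp add: K_def)
  ultimately have "(\<integral>\<^sup>+ z. emeasure \<mu> (ball z 1) \<partial>lborel) < \<infinity>"
    by (auto simp: ennreal_mult_less_top)
  then show "emeasure \<mu> UNIV < \<infinity>"
    using nn_integral_emeasure_ball_finite_iff[OF sets, of 1] by simp
next
  assume fin: "emeasure \<mu> UNIV < \<infinity>"
  have sigma: "sigma_finite_measure \<mu>"
    using sigma_finite_if_emeasure_UNIV_finite[OF sets fin] .
  show "\<forall>t>0. (\<integral>\<^sup>+ z. berezin \<alpha> t \<mu> z \<partial>lborel) < \<infinity>"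
  proof (intro allI impI)
    fix t :: real assume "t > 0"
    then have "(\<integral>\<^sup>+ u. ennreal (exp (- (\<alpha> * t / 2) * (cmod u)\<^sup>2)) \<partial>lborel) < \<infinity>"
      using \<alpha> by (intro nn_integral_exp_neg_norm_sq_finite) simp
    with fin show "(\<integral>\<^sup>+ z. berezin \<alpha> t \<mu> z \<partial>lborel) < \<infinity>"
      by (simp add: nn_integral_berezin[OF sets sigma] ennreal_mult_less_top)
  qed
qed

section \<open>Fock-Carleson measures\<close>

lemma fock_inf_weighted_le_norm:
  assumes "f \<in> fock_inf \<alpha>"
  shows "norm (f z) * exp (- \<alpha> * (cmod z)\<^sup>2 / 2) \<le> fock_inf_norm \<alpha> f"
  using assms unfolding fock_inf_def fock_inf_norm_def by (auto intro: cSUP_upper)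

lemma fock_inf_norm_nonneg: "f \<in> fock_inf \<alpha> \<Longrightarrow> fock_inf_norm \<alpha> f \<ge> 0"
  using fock_inf_weighted_le_norm[of f \<alpha> 0]
  by (meson mult_nonneg_nonneg norm_ge_zero exp_ge_zero order_trans)

lemma fock_inf_if_weighted_le:
  assumes "f holomorphic_on UNIV" and "\<And>z. norm (f z) * exp (- \<alpha> * (cmod z)\<^sup>2 / 2) \<le> M"
  shows "f \<in> fock_inf \<alpha>" and "fock_inf_norm \<alpha> f \<le> M"
  using assms unfolding fock_inf_def fock_inf_norm_def
  by (auto simp: bdd_above_def intro: cSUP_least)

lemma fock_inf_divide:
  assumes "f \<in> fock_inf \<alpha>" and "c > 0"
  shows "(\<lambda>z. f z / of_real c) \<in> fock_inf \<alpha>"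
    and "fock_inf_norm \<alpha> (\<lambda>z. f z / of_real c) \<le> fock_inf_norm \<alpha> f / c"
proof -
  have "norm (f z / of_real c) * exp (- \<alpha> * (cmod z)\<^sup>2 / 2) \<le> fock_inf_norm \<alpha> f / c" for z
    using fock_inf_weighted_le_norm[OF assms(1), of z] assms(2)
    by (simp add: norm_divide field_simps)
  moreover have "(\<lambda>z. f z / of_real c) holomorphic_on UNIV"
    using assms unfolding fock_inf_def by (auto intro!: holomorphic_intros)
  ultimately show "(\<lambda>z. f z / of_real c) \<in> fock_inf \<alpha>"
    and "fock_inf_norm \<alpha> (\<lambda>z. f z / of_real c) \<le> fock_inf_norm \<alpha> f / c"
    using fock_inf_if_weighted_le by blast+
qed

lemma fock_carleson_inf_if_finite:
  fixes \<mu> :: "complex measure"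
  assumes sets: "sets \<mu> = sets borel" and q: "q > 0" and fin: "emeasure \<mu> UNIV < \<infinity>"
  shows "fock_carleson_inf \<alpha> q \<mu>"
  unfolding fock_carleson_inf_def
proof (intro exI conjI ballI)
  define m where "m = enn2real (emeasure \<mu> UNIV)"
  have m: "emeasure \<mu> UNIV = ennreal m" "m \<ge> 0"
    using fin by (auto simp: m_def ennreal_enn2real_if less_top)
  \<comment> \<open>The summand 1 keeps the constant positive when \<open>\<mu> = 0\<close>.\<close>
  show "m powr (1 / q) + 1 > 0"
    by (simp add: add_nonneg_pos)
  fix f assume f: "f \<in> fock_inf \<alpha>"
  define N where "N = fock_inf_norm \<alpha> f"
  let ?w = "\<lambda>z. norm (f z) * exp (- \<alpha> * (cmod z)\<^sup>2 / 2)"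
  have wN: "?w z \<le> N" for z
    using fock_inf_weighted_le_norm[OF f] by (simp add: N_def)
  have N: "N \<ge> 0"
    using fock_inf_norm_nonneg[OF f] by (simp add: N_def)
  have "(\<integral>\<^sup>+ z. ennreal (?w z powr q) \<partial>\<mu>) \<le> (\<integral>\<^sup>+ z. ennreal (N powr q) \<partial>\<mu>)"
    using wN q by (intro nn_integral_mono ennreal_leI powr_mono2) auto
  also have "\<dots> = ennreal (N powr q * m)"
    using m sets_eq_imp_space_eq[OF sets] by (simp add: ennreal_mult)
  finally have I: "(\<integral>\<^sup>+ z. ennreal (?w z powr q) \<partial>\<mu>) \<le> ennreal (N powr q * m)" .
  then show "(\<integral>\<^sup>+ z. ennreal (?w z powr q) \<partial>\<mu>) < \<infinity>"
    using le_less_trans by fastforce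
  have "enn2real (\<integral>\<^sup>+ z. ennreal (?w z powr q) \<partial>\<mu>) powr (1 / q) \<le> (N powr q * m) powr (1 / q)"
    using I m q by (intro powr_mono2 enn2real_leI) auto
  also have "\<dots> = N * m powr (1 / q)"
    using q N m by (simp add: powr_mult powr_powr)
  also have "\<dots> \<le> (m powr (1 / q) + 1) * fock_inf_norm \<alpha> f"
    using N by (simp add: N_def algebra_simps)
  finally show "enn2real (\<integral>\<^sup>+ z. ennreal (?w z powr q) \<partial>\<mu>) powr (1 / q)
                  \<le> (m powr (1 / q) + 1) * fock_inf_norm \<alpha> f" .
qed

lemma fock_carleson_inf_nn_integral_le:
  assumes "fock_carleson_inf \<alpha> q \<mu>" and q: "q > 0"
  obtains C where "C > 0" and "\<And>f. f \<in> fock_inf \<alpha> \<Longrightarrow>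
      (\<integral>\<^sup>+ z. ennreal ((norm (f z) * exp (- \<alpha> * (cmod z)\<^sup>2 / 2)) powr q) \<partial>\<mu>)
        \<le> ennreal ((C * fock_inf_norm \<alpha> f) powr q)"
proof -
  obtain C where "C > 0" and C: "\<And>f. f \<in> fock_inf \<alpha> \<Longrightarrow>
      (\<integral>\<^sup>+ z. ennreal ((norm (f z) * exp (- \<alpha> * (cmod z)\<^sup>2 / 2)) powr q) \<partial>\<mu>) < \<infinity> \<and>
      enn2real (\<integral>\<^sup>+ z. ennreal ((norm (f z) * exp (- \<alpha> * (cmod z)\<^sup>2 / 2)) powr q) \<partial>\<mu>)
        powr (1 / q) \<le> C * fock_inf_norm \<alpha> f"
    using assms(1) unfolding fock_carleson_inf_def by blast
  have "(\<integral>\<^sup>+ z. ennreal ((norm (f z) * exp (- \<alpha> * (cmod z)\<^sup>2 / 2)) powr q) \<partial>\<mu>)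
          \<le> ennreal ((C * fock_inf_norm \<alpha> f) powr q)" if f: "f \<in> fock_inf \<alpha>" for f
  proof -
    let ?I = "\<integral>\<^sup>+ z. ennreal ((norm (f z) * exp (- \<alpha> * (cmod z)\<^sup>2 / 2)) powr q) \<partial>\<mu>"
    have "enn2real ?I = (enn2real ?I powr (1 / q)) powr q"
      using q by (simp add: powr_powr)
    also have "\<dots> \<le> (C * fock_inf_norm \<alpha> f) powr q"
      using C[OF f] q by (intro powr_mono2) auto
    finally have "ennreal (enn2real ?I) \<le> ennreal ((C * fock_inf_norm \<alpha> f) powr q)"
      by (rule ennreal_leI)
    moreover have "ennreal (enn2real ?I) = ?I"
      using C[OF f] by (intro ennreal_enn2real) (simp add: less_top)
    ultimately show ?thesis
      by metis
  qed
  with \<open>C > 0\<close> show ?thesis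
    using that by blast
qed

lemma emeasure_le_if_fock_inf_cover:
  fixes \<mu> :: "complex measure"
  assumes sets: "sets \<mu> = sets borel" and "finite I" and "A \<in> sets borel" and q: "q > 0"
    and "C \<ge> 0" and c: "c > 0"
    and carleson: "\<And>f. f \<in> fock_inf \<alpha> \<Longrightarrow>
      (\<integral>\<^sup>+ z. ennreal ((norm (f z) * exp (- \<alpha> * (cmod z)\<^sup>2 / 2)) powr q) \<partial>\<mu>)
        \<le> ennreal ((C * fock_inf_norm \<alpha> f) powr q)"
    and fock: "\<And>i. i \<in> I \<Longrightarrow> f i \<in> fock_inf \<alpha>"
    and norm: "\<And>i. i \<in> I \<Longrightarrow> fock_inf_norm \<alpha> (f i) \<le> M"
    and cover: "\<And>z. z \<in> A \<Longrightarrow> \<exists>i\<in>I. c \<le> norm (f i z) * exp (- \<alpha> * (cmod z)\<^sup>2 / 2)"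
  shows "emeasure \<mu> A \<le> of_nat (card I) * ennreal ((C * (M / c)) powr q)"
proof -
  define g where "g i z = f i z / of_real c" for i z
  have g: "g i \<in> fock_inf \<alpha>" "fock_inf_norm \<alpha> (g i) \<le> M / c" if "i \<in> I" for i
  proof -
    have "fock_inf_norm \<alpha> (f i) / c \<le> M / c"
      using norm[OF that] c by (simp add: divide_right_mono)
    then show "g i \<in> fock_inf \<alpha>" "fock_inf_norm \<alpha> (g i) \<le> M / c"
      using fock_inf_divide[OF fock[OF that] c] unfolding g_def[abs_def] by auto
  qed
  let ?w = "\<lambda>i z. ennreal ((norm (g i z) * exp (- \<alpha> * (cmod z)\<^sup>2 / 2)) powr q)"
  have "emeasure \<mu> A \<le> (\<Sum>i\<in>I. \<integral>\<^sup>+ z. ?w i z \<partial>\<mu>)"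
  proof (rule emeasure_le_sum_nn_integral_if_cover)
    show "A \<in> sets \<mu>"
      using assms(3) by (simp add: sets)
    show "?w i \<in> borel_measurable \<mu>" if "i \<in> I" for i
    proof -
      have [measurable]: "g i \<in> borel_measurable borel"
        using g(1)[OF that] unfolding fock_inf_def
        by (intro borel_measurable_continuous_onI holomorphic_on_imp_continuous_on) auto
      show ?thesis
        unfolding measurable_cong_sets[OF sets refl] by measurable
    qed
    show "\<exists>i\<in>I. 1 \<le> ?w i z" if z: "z \<in> A" for z
    proof -
      obtain i where "i \<in> I" and "c \<le> norm (f i z) * exp (- \<alpha> * (cmod z)\<^sup>2 / 2)"
        using cover[OF z] by blast
      then have "1 \<le> norm (g i z) * exp (- \<alpha> * (cmod z)\<^sup>2 / 2)"
        using c by (simp add: g_def norm_divide field_simps)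
      with \<open>i \<in> I\<close> show ?thesis
        using q by (auto intro!: bexI[of _ i] ge_one_powr_ge_zero)
    qed
  qed fact
  also have "\<dots> \<le> (\<Sum>i\<in>I. ennreal ((C * (M / c)) powr q))"
  proof (intro sum_mono order_trans[OF carleson[OF g(1)]] ennreal_leI powr_mono2)
    fix i assume i: "i \<in> I"
    show "C * fock_inf_norm \<alpha> (g i) \<le> C * (M / c)"
      using g(2)[OF i] assms(5) by (rule mult_left_mono)
    show "0 \<le> C * fock_inf_norm \<alpha> (g i)"
      using g(1)[OF i] assms(5) fock_inf_norm_nonneg by simp
  qed (use q in auto)
  finally show ?thesis
    by simp
qed

section \<open>Sums of Fock kernels along shifted lattices\<close>

lemma norm_sum_ge_term_minus_rest:
  fixes a :: "'i \<Rightarrow> 'a::real_normed_vector"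
  assumes "finite J" and "j0 \<in> J"
  shows "norm (a j0) - (\<Sum>j\<in>J - {j0}. norm (a j)) \<le> norm (\<Sum>j\<in>J. a j)"
proof -
  have "norm (a j0) \<le> norm (\<Sum>j\<in>J. a j) + norm (\<Sum>j\<in>J - {j0}. a j)"
    using sum.remove[OF assms, of a] by (metis add_diff_cancel_right' norm_triangle_ineq4)
  moreover have "norm (\<Sum>j\<in>J - {j0}. a j) \<le> (\<Sum>j\<in>J - {j0}. norm (a j))"
    by (rule norm_sum)
  ultimately show ?thesis by linarith
qed

lemma sum_power_Suc_inj_le:
  fixes \<rho> :: real
  assumes "0 \<le> \<rho>" "\<rho> < 1" and "finite F" and "inj_on g F"
  shows "(\<Sum>j\<in>F. \<rho> ^ Suc (g j)) \<le> \<rho> / (1 - \<rho>)"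
proof -
  have sums: "(\<lambda>m. \<rho> ^ Suc m) sums (\<rho> / (1 - \<rho>))"
    using sums_mult[OF geometric_sums[of \<rho>], of \<rho>] assms(1,2) by simp
  have "(\<Sum>j\<in>F. \<rho> ^ Suc (g j)) = (\<Sum>m\<in>g ` F. \<rho> ^ Suc m)"
    by (simp add: sum.reindex[OF assms(4)])
  also have "\<dots> \<le> (\<Sum>m. \<rho> ^ Suc m)"
    using sums assms by (intro sum_le_suminf) (auto simp: sums_iff)
  also have "\<dots> = \<rho> / (1 - \<rho>)"
    using sums by (simp add: sums_iff)
  finally show ?thesis .
qed

lemma sum_power_abs_diff_le:
  fixes \<rho> :: real and j0 :: int
  assumes "0 \<le> \<rho>" "\<rho> < 1" and "finite J"
  shows "(\<Sum>j\<in>J - {j0}. \<rho> ^ nat \<bar>j - j0\<bar>) \<le> 2 * \<rho> / (1 - \<rho>)"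
proof -
  have "(\<Sum>j\<in>J - {j0}. \<rho> ^ nat \<bar>j - j0\<bar>) = (\<Sum>j\<in>J \<inter> {j0<..} \<union> J \<inter> {..<j0}. \<rho> ^ nat \<bar>j - j0\<bar>)"
    by (rule sum.cong) auto
  also have "\<dots> = (\<Sum>j\<in>J \<inter> {j0<..}. \<rho> ^ nat \<bar>j - j0\<bar>) + (\<Sum>j\<in>J \<inter> {..<j0}. \<rho> ^ nat \<bar>j - j0\<bar>)"
    using assms(3) by (intro sum.union_disjoint) auto
  also have "\<dots> = (\<Sum>j\<in>J \<inter> {j0<..}. \<rho> ^ Suc (nat (j - j0 - 1)))
                  + (\<Sum>j\<in>J \<inter> {..<j0}. \<rho> ^ Suc (nat (j0 - j - 1)))"
    by (intro arg_cong2[where f = "(+)"] sum.cong) (auto simp: Suc_nat_eq_nat_zadd1)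
  also have "\<dots> \<le> \<rho> / (1 - \<rho>) + \<rho> / (1 - \<rho>)"
    using assms by (intro add_mono sum_power_Suc_inj_le) (auto simp: inj_on_def)
  finally show ?thesis by simp
qed

lemma exp_gaussian_lattice_le:
  fixes \<alpha> h x p :: real and j j0 :: int
  assumes "\<alpha> \<ge> 0" "h \<ge> 0" and near: "\<bar>x - (h * j0 + p)\<bar> \<le> h / 2" and "j \<noteq> j0"
  shows "exp (- \<alpha> * (x - (h * j + p))\<^sup>2 / 2) \<le> exp (- \<alpha> * h\<^sup>2 / 8) ^ nat \<bar>j - j0\<bar>"
proof -
  define m where "m = \<bar>j - j0\<bar>"
  have m: "m \<ge> 1" using assms(4) by (simp add: m_def)
  have "h * m = \<bar>(x - (h * j0 + p)) - (x - (h * j + p))\<bar>"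
    using assms(2) by (simp add: m_def abs_mult flip: right_diff_distrib)
  also have "\<dots> \<le> \<bar>x - (h * j0 + p)\<bar> + \<bar>x - (h * j + p)\<bar>"
    by (rule abs_triangle_ineq4)
  finally have "h * m - h / 2 \<le> \<bar>x - (h * j + p)\<bar>"
    using near by linarith
  moreover have "h * m / 2 \<le> h * m - h / 2"
    using m assms(2) mult_left_mono[of 1 "real_of_int m" h] by simp
  ultimately have "h * m / 2 \<le> \<bar>x - (h * j + p)\<bar>"
    by linarith
  then have "(h * m / 2)\<^sup>2 \<le> \<bar>x - (h * j + p)\<bar>\<^sup>2"
    using m assms(2) by (intro power_mono) auto
  moreover have "h\<^sup>2 * m / 4 \<le> (h * m / 2)\<^sup>2"
  proof -
    have "real_of_int m \<le> m * m"
      using m by (simp add: mult_le_cancel_left1)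
    from mult_left_mono[OF this, of "h\<^sup>2 / 4"] show ?thesis
      by (simp add: power2_eq_square field_simps)
  qed
  ultimately have "real (nat m) * (- \<alpha> * h\<^sup>2 / 8) \<ge> - \<alpha> * (x - (h * j + p))\<^sup>2 / 2"
    using m assms(1) by (simp add: field_simps mult_left_mono)
  then have "exp (- \<alpha> * (x - (h * j + p))\<^sup>2 / 2) \<le> exp (real (nat m) * (- \<alpha> * h\<^sup>2 / 8))"
    by simp
  also have "\<dots> = exp (- \<alpha> * h\<^sup>2 / 8) ^ nat m"
    by (rule exp_of_nat_mult)
  finally show ?thesis
    unfolding m_def .
qed

definition gauss_tail :: "real \<Rightarrow> real \<Rightarrow> real" where
  "gauss_tail \<alpha> h = 2 * exp (- \<alpha> * h\<^sup>2 / 8) / (1 - exp (- \<alpha> * h\<^sup>2 / 8))"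

lemma gauss_tail_nonneg: "\<alpha> \<ge> 0 \<Longrightarrow> gauss_tail \<alpha> h \<ge> 0"
  unfolding gauss_tail_def by (intro divide_nonneg_nonneg) auto

lemma sum_exp_gaussian_lattice_le:
  fixes \<alpha> h x p :: real and j0 :: int
  assumes "\<alpha> > 0" "h > 0" and "\<bar>x - (h * j0 + p)\<bar> \<le> h / 2" and "finite J"
  shows "(\<Sum>j\<in>J - {j0}. exp (- \<alpha> * (x - (h * j + p))\<^sup>2 / 2)) \<le> gauss_tail \<alpha> h"
proof -
  have "(\<Sum>j\<in>J - {j0}. exp (- \<alpha> * (x - (h * j + p))\<^sup>2 / 2))
          \<le> (\<Sum>j\<in>J - {j0}. exp (- \<alpha> * h\<^sup>2 / 8) ^ nat \<bar>j - j0\<bar>)"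
    using assms by (intro sum_mono exp_gaussian_lattice_le) auto
  also have "\<dots> \<le> gauss_tail \<alpha> h"
    unfolding gauss_tail_def using assms by (intro sum_power_abs_diff_le) auto
  finally show ?thesis .
qed

lemma gauss_tail_tendsto_zero:
  assumes "\<alpha> > 0"
  shows "(gauss_tail \<alpha> \<longlongrightarrow> 0) at_top"
proof -
  have "((\<lambda>h. exp (- \<alpha> * h\<^sup>2 / 8)) \<longlongrightarrow> 0) at_top"
    using assms by real_asymp
  then have "((\<lambda>h. 2 * exp (- \<alpha> * h\<^sup>2 / 8) / (1 - exp (- \<alpha> * h\<^sup>2 / 8))) \<longlongrightarrow> 2 * 0 / (1 - 0)) at_top"
    by (intro tendsto_intros) auto
  then show ?thesis
    by (simp add: gauss_tail_def[abs_def])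
qed

lemma exists_lattice_point_near:
  fixes h :: real assumes "h > 0"
  shows "\<exists>j0::int. \<bar>x - (h * j0 + p)\<bar> \<le> h / 2"
proof -
  define j0 where "j0 = \<lfloor>(x - p) / h + 1 / 2\<rfloor>"
  have "\<bar>(x - p) / h - j0\<bar> \<le> 1 / 2"
    unfolding j0_def by linarith
  then have "\<bar>x - (h * j0 + p)\<bar> \<le> h / 2"
    using assms by (simp add: abs_le_iff field_simps)
  then show ?thesis ..
qed

(* Sum of the normalised reproducing kernels exp (alpha u z - alpha u^2/2) of the Fock space at the
   real points u = h j + p, j in J. *)
definition gauss_row :: "real \<Rightarrow> real \<Rightarrow> real \<Rightarrow> int set \<Rightarrow> complex \<Rightarrow> complex" where
  "gauss_row \<alpha> h p J z =
     (\<Sum>j\<in>J. exp (of_real (\<alpha> * (h * of_int j + p)) * z - of_real (\<alpha> * (h * of_int j + p)\<^sup>2 / 2)))"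

lemma norm_exp_fock_kernel_weighted:
  "norm (exp (of_real (\<alpha> * u) * z - of_real (\<alpha> * u\<^sup>2 / 2))) * exp (- \<alpha> * (Re z)\<^sup>2 / 2)
     = exp (- \<alpha> * (Re z - u)\<^sup>2 / 2)"
  by (simp add: exp_add[symmetric] power2_diff algebra_simps)

lemma gauss_row_weighted_le:
  assumes "\<alpha> > 0" "h > 0" and "finite J"
  shows "norm (gauss_row \<alpha> h p J z) * exp (- \<alpha> * (Re z)\<^sup>2 / 2) \<le> 1 + gauss_tail \<alpha> h"
proof -
  let ?e = "\<lambda>j::int. exp (- \<alpha> * (Re z - (h * j + p))\<^sup>2 / 2)"
  obtain j0 :: int where j0: "\<bar>Re z - (h * j0 + p)\<bar> \<le> h / 2"
    using exists_lattice_point_near[OF assms(2)] by blast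
  let ?a = "\<lambda>j::int. exp (of_real (\<alpha> * (h * j + p)) * z - of_real (\<alpha> * (h * j + p)\<^sup>2 / 2))"
  have "norm (gauss_row \<alpha> h p J z) * exp (- \<alpha> * (Re z)\<^sup>2 / 2)
          \<le> (\<Sum>j\<in>J. norm (?a j)) * exp (- \<alpha> * (Re z)\<^sup>2 / 2)"
    unfolding gauss_row_def by (intro mult_right_mono norm_sum) simp
  also have "\<dots> = (\<Sum>j\<in>J. ?e j)"
    by (simp only: sum_distrib_right norm_exp_fock_kernel_weighted)
  also have "\<dots> \<le> ?e j0 + (\<Sum>j\<in>J - {j0}. ?e j)"
    using assms(3) by (cases "j0 \<in> J") (simp_all add: sum.remove)
  also have "\<dots> \<le> 1 + gauss_tail \<alpha> h"
    using assms sum_exp_gaussian_lattice_le[OF assms(1,2) j0 assms(3)] by (intro add_mono) auto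
  finally show ?thesis .
qed

lemma gauss_row_weighted_ge:
  assumes "\<alpha> > 0" "h \<ge> 1" and "finite J" and "j0 \<in> J"
    and near: "\<bar>Re z - (h * j0 + p)\<bar> \<le> 1 / 2"
  shows "exp (- \<alpha> / 8) - gauss_tail \<alpha> h \<le> norm (gauss_row \<alpha> h p J z) * exp (- \<alpha> * (Re z)\<^sup>2 / 2)"
proof -
  let ?a = "\<lambda>j::int. exp (of_real (\<alpha> * (h * j + p)) * z - of_real (\<alpha> * (h * j + p)\<^sup>2 / 2))"
  let ?e = "\<lambda>j::int. exp (- \<alpha> * (Re z - (h * j + p))\<^sup>2 / 2)"
  define d where "d = Re z - (h * j0 + p)"
  have "d\<^sup>2 \<le> (1 / 2)\<^sup>2"
    using near unfolding d_def by (metis abs_ge_zero power2_abs power_mono)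
  then have "\<alpha> * d\<^sup>2 \<le> \<alpha> / 4"
    using mult_left_mono[of "d\<^sup>2" "(1 / 2)\<^sup>2" \<alpha>] assms(1) by (simp add: power_divide)
  then have "exp (- \<alpha> / 8) \<le> ?e j0"
    by (simp add: d_def[symmetric])
  moreover have "(\<Sum>j\<in>J - {j0}. ?e j) \<le> gauss_tail \<alpha> h"
    using near assms by (intro sum_exp_gaussian_lattice_le) auto
  moreover have "(norm (?a j0) - (\<Sum>j\<in>J - {j0}. norm (?a j))) * exp (- \<alpha> * (Re z)\<^sup>2 / 2)
                   \<le> norm (gauss_row \<alpha> h p J z) * exp (- \<alpha> * (Re z)\<^sup>2 / 2)"
    unfolding gauss_row_def using assms(3,4)
    by (intro mult_right_mono norm_sum_ge_term_minus_rest) auto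
  moreover have "(norm (?a j0) - (\<Sum>j\<in>J - {j0}. norm (?a j))) * exp (- \<alpha> * (Re z)\<^sup>2 / 2)
                   = ?e j0 - (\<Sum>j\<in>J - {j0}. ?e j)"
    by (simp only: left_diff_distrib sum_distrib_right norm_exp_fock_kernel_weighted)
  ultimately show ?thesis
    by linarith
qed

lemma abs_div_le_abs:
  fixes k N :: int
  assumes "N \<ge> 1"
  shows "\<bar>k div N\<bar> \<le> \<bar>k\<bar>"
  using assms by (smt (verit) div_by_1 pos_imp_zdiv_nonneg_iff zdiv_mono2 zdiv_mono2_neg)

lemma exists_shifted_lattice_point_near:
  fixes x :: real and L N :: nat
  assumes "\<bar>x\<bar> \<le> L" and "N \<ge> 1"
  shows "\<exists>p<N. \<exists>j\<in>{- int L..int L}. \<bar>x - (N * j + p)\<bar> \<le> 1 / 2"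
proof -
  define k where "k = \<lfloor>x + 1 / 2\<rfloor>"
  have xk: "\<bar>x - k\<bar> \<le> 1 / 2"
    unfolding k_def by linarith
  have kL: "\<bar>k\<bar> \<le> int L"
    using assms(1) unfolding k_def by linarith
  define j where "j = k div int N"
  define p where "p = nat (k mod int N)"
  have "k = int N * j + int p"
    using assms(2) by (simp add: j_def p_def)
  then have "real_of_int k = real N * j + p"
    by (metis of_int_add of_int_mult of_int_of_nat_eq)
  moreover have "p < N"
    using assms(2) by (simp add: p_def nat_less_iff)
  moreover have "\<bar>j\<bar> \<le> int L"
    using abs_div_le_abs[of "int N" k] assms(2) kL by (simp add: j_def)
  ultimately show ?thesis
    using xk by force
qed

(* Since Re (- i z) = Im z, the second factor does in the imaginary direction what the first does
   in the real one, and the weight exp (- alpha |z|^2/2) splits accordingly. *)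
definition gauss_grid :: "real \<Rightarrow> real \<Rightarrow> real \<Rightarrow> real \<Rightarrow> int set \<Rightarrow> complex \<Rightarrow> complex" where
  "gauss_grid \<alpha> h p s J z = gauss_row \<alpha> h p J z * gauss_row \<alpha> h s J (- \<i> * z)"

lemma gauss_grid_weighted:
  "norm (gauss_grid \<alpha> h p s J z) * exp (- \<alpha> * (cmod z)\<^sup>2 / 2)
     = (norm (gauss_row \<alpha> h p J z) * exp (- \<alpha> * (Re z)\<^sup>2 / 2))
       * (norm (gauss_row \<alpha> h s J (- \<i> * z)) * exp (- \<alpha> * (Re (- \<i> * z))\<^sup>2 / 2))"
proof -
  have "exp (- \<alpha> * (cmod z)\<^sup>2 / 2) = exp (- \<alpha> * (Re z)\<^sup>2 / 2) * exp (- \<alpha> * (Im z)\<^sup>2 / 2)"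
    by (simp add: cmod_power2 field_simps flip: exp_add)
  then show ?thesis
    by (simp add: gauss_grid_def norm_mult)
qed

lemma gauss_grid_weighted_le:
  assumes "\<alpha> > 0" "h > 0" and "finite J"
  shows "norm (gauss_grid \<alpha> h p s J z) * exp (- \<alpha> * (cmod z)\<^sup>2 / 2) \<le> (1 + gauss_tail \<alpha> h)\<^sup>2"
  unfolding gauss_grid_weighted power2_eq_square[of "1 + gauss_tail \<alpha> h"]
  using gauss_row_weighted_le[OF assms, of p z] gauss_row_weighted_le[OF assms, of s "- \<i> * z"]
    gauss_tail_nonneg[of \<alpha> h] assms(1) by (intro mult_mono) auto

lemma gauss_grid_weighted_ge:
  assumes "\<alpha> > 0" "h \<ge> 1" and "finite J" and "gauss_tail \<alpha> h \<le> exp (- \<alpha> / 8) / 2"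
    and "j \<in> J" "\<bar>Re z - (h * j + p)\<bar> \<le> 1 / 2"
    and "l \<in> J" "\<bar>Im z - (h * l + s)\<bar> \<le> 1 / 2"
  shows "(exp (- \<alpha> / 8) / 2)\<^sup>2 \<le> norm (gauss_grid \<alpha> h p s J z) * exp (- \<alpha> * (cmod z)\<^sup>2 / 2)"
  unfolding gauss_grid_weighted power2_eq_square[of "exp (- \<alpha> / 8) / 2"]
  using gauss_row_weighted_ge[OF assms(1-3,5-6)]
    gauss_row_weighted_ge[OF assms(1-3,7), of "- \<i> * z" s]
    assms(4,8) by (intro mult_mono) auto

lemma gauss_grid_holomorphic: "gauss_grid \<alpha> h p s J holomorphic_on UNIV"
  unfolding gauss_grid_def gauss_row_def by (intro holomorphic_intros)

lemma gauss_grid_fock_inf: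
  assumes "\<alpha> > 0" "h > 0" and "finite J"
  shows "gauss_grid \<alpha> h p s J \<in> fock_inf \<alpha>"
    and "fock_inf_norm \<alpha> (gauss_grid \<alpha> h p s J) \<le> (1 + gauss_tail \<alpha> h)\<^sup>2"
  using fock_inf_if_weighted_le[OF gauss_grid_holomorphic gauss_grid_weighted_le[OF assms]] by auto

lemma gauss_grid_cover:
  fixes N n :: nat
  assumes "\<alpha> > 0" and "N \<ge> 1" and tail: "gauss_tail \<alpha> N \<le> exp (- \<alpha> / 8) / 2"
    and "cmod z < n"
  shows "\<exists>p<N. \<exists>s<N. (exp (- \<alpha> / 8) / 2)\<^sup>2
            \<le> norm (gauss_grid \<alpha> N p s {- int n..int n} z) * exp (- \<alpha> * (cmod z)\<^sup>2 / 2)"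
proof -
  obtain p and j :: int where p: "p < N" "j \<in> {- int n..int n}" "\<bar>Re z - (N * j + p)\<bar> \<le> 1 / 2"
    using exists_shifted_lattice_point_near[of "Re z" n N] abs_Re_le_cmod[of z] assms(2,4) by auto
  obtain s and l :: int where s: "s < N" "l \<in> {- int n..int n}" "\<bar>Im z - (N * l + s)\<bar> \<le> 1 / 2"
    using exists_shifted_lattice_point_near[of "Im z" n N] abs_Im_le_cmod[of z] assms(2,4) by auto
  have "(exp (- \<alpha> / 8) / 2)\<^sup>2
          \<le> norm (gauss_grid \<alpha> N p s {- int n..int n} z) * exp (- \<alpha> * (cmod z)\<^sup>2 / 2)"
    using assms(2) p(2,3) s(2,3) by (intro gauss_grid_weighted_ge[OF assms(1) _ _ tail]) auto
  with p(1) s(1) show ?thesis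
    by blast
qed

lemma emeasure_finite_if_fock_carleson_inf:
  fixes \<mu> :: "complex measure"
  assumes sets: "sets \<mu> = sets borel" and \<alpha>: "\<alpha> > 0" and q: "q > 0"
    and carleson: "fock_carleson_inf \<alpha> q \<mu>"
  shows "emeasure \<mu> UNIV < \<infinity>"
proof -
  obtain C where "C > 0" and C: "\<And>f. f \<in> fock_inf \<alpha> \<Longrightarrow>
      (\<integral>\<^sup>+ z. ennreal ((norm (f z) * exp (- \<alpha> * (cmod z)\<^sup>2 / 2)) powr q) \<partial>\<mu>)
        \<le> ennreal ((C * fock_inf_norm \<alpha> f) powr q)"
    using fock_carleson_inf_nn_integral_le[OF carleson q] by blast
  define E where "E = exp (- \<alpha> / 8)"
  \<comment> \<open>Spacing so sparse that in each row the other kernels weigh at most half the nearest one.\<close>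
  have "\<forall>\<^sub>F N in sequentially. gauss_tail \<alpha> (real N) < E / 2"
    using gauss_tail_tendsto_zero[OF \<alpha>] filterlim_real_sequentially
    by (rule order_tendstoD(2)[OF filterlim_compose]) (simp add: E_def)
  then obtain N :: nat where N: "N \<ge> 1" and tail: "gauss_tail \<alpha> N \<le> E / 2"
    by (metis (mono_tags) eventually_sequentially less_imp_le nle_le)
  define K where "K = of_nat (card ({..<N} \<times> {..<N}))
                        * ennreal ((C * ((1 + gauss_tail \<alpha> N)\<^sup>2 / (E / 2)\<^sup>2)) powr q)"
  have "emeasure \<mu> (ball 0 n) \<le> K" for n :: nat
    unfolding K_def
  proof (rule emeasure_le_if_fock_inf_cover[OF sets _ _ q _ _ C,
        where f = "\<lambda>(p :: nat, s :: nat). gauss_grid \<alpha> N p s {- int n..int n}"])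
    show "\<exists>ps\<in>{..<N} \<times> {..<N}.
            (E / 2)\<^sup>2 \<le> norm ((\<lambda>(p :: nat, s :: nat). gauss_grid \<alpha> N p s {- int n..int n}) ps z)
                           * exp (- \<alpha> * (cmod z)\<^sup>2 / 2)"
      if "z \<in> ball 0 n" for z
      using gauss_grid_cover[OF \<alpha> N tail[unfolded E_def], of z n] that by (auto simp: E_def)
  qed (use \<open>C > 0\<close> \<alpha> N gauss_grid_fock_inf in \<open>auto simp: E_def\<close>)
  then have "emeasure \<mu> UNIV \<le> K"
    by (rule emeasure_UNIV_le_if_emeasure_ball_le[OF sets])
  then show ?thesis
    by (simp add: K_def le_less_trans ennreal_mult_less_top of_nat_less_top)
qed

lemma fock_carleson_inf_iff_finite:
  fixes \<mu> :: "complex measure"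
  assumes "sets \<mu> = sets borel" and "\<alpha> > 0" and "q > 0"
  shows "fock_carleson_inf \<alpha> q \<mu> \<longleftrightarrow> emeasure \<mu> UNIV < \<infinity>"
  using emeasure_finite_if_fock_carleson_inf[OF assms] fock_carleson_inf_if_finite[OF assms(1,3)]
  by blast

theorem theorem2p6:
  fixes \<alpha> q r :: real and \<mu> :: "complex measure" and a :: "nat \<Rightarrow> complex"
  assumes "\<alpha> > 0" and "q > 0" and "r > 0"
    and "sets \<mu> = sets borel"
    and "r_lattice r a"
  shows "(fock_carleson_inf \<alpha> q \<mu> \<longleftrightarrow>
           (\<forall>t>0. (\<integral>\<^sup>+ z. berezin \<alpha> t \<mu> z \<partial>lborel) < \<infinity>))
       \<and> ((\<forall>t>0. (\<integral>\<^sup>+ z. berezin \<alpha> t \<mu> z \<partial>lborel) < \<infinity>) \<longleftrightarrow>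
           (\<integral>\<^sup>+ z. emeasure \<mu> (ball z r) \<partial>lborel) < \<infinity>)
       \<and> ((\<integral>\<^sup>+ z. emeasure \<mu> (ball z r) \<partial>lborel) < \<infinity> \<longleftrightarrow>
           (\<Sum>k. emeasure \<mu> (ball (a k) r)) < \<infinity>)"
  using fock_carleson_inf_iff_finite[OF assms(4,1,2)]
    nn_integral_berezin_finite_iff[OF assms(4,1)]
    nn_integral_emeasure_ball_finite_iff[OF assms(4,3)]
    r_lattice_suminf_emeasure_finite_iff[OF assms(4,5,3)]
  by blast

end
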